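(* Let $M\in\mathbb{R}^{m\times k}$ and let $P\in\mathbb{R}^{k\times k}$ be a projector along $\ker M$. Let $r:\mathbb{R}^n\to\mathbb{R}^k$ be continuous. Then there is a continuous function $g:\mathbb{R}^n\to\mathbb{R}^k$ such that for all $z\in\mathbb{R}^k$ and $y\in\mathbb{R}^n$: $M^\top Mz+P^\top r(y)=0$ if and only if $Pz=g(y)$.
   Context: A projector along $\ker M$ is a matrix $P$ with $P^2=P$ and $\ker P=\ker M$. *)

theory Defs
  imports "HOL-Analysis.Analysis"
begin

definition mat_ker :: "('a::real_normed_field) ^'k^'m \<Rightarrow> ('a^'k) set" where
  "mat_ker M = {x. M *v x = 0}"

definition projector_along_ker :: "real^'k^'k \<Rightarrow> real^'k^'m \<Rightarrow> bool" where
  "projector_along_ker P M \<longleftrightarrow> P ** P = P \<and> mat_ker P = mat_ker M"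

end

theory Submission
  imports Defs
begin

text \<open>Since \<open>x \<bullet> (M\<^sup>T M x) = \<parallel>M x\<parallel>\<^sup>2\<close>, the kernel of \<open>B = M\<^sup>T M\<close> is \<open>ker M = ker P\<close>. Hence
  \<open>range P\<^sup>T = (ker P)\<^sup>\<bottom> = (ker B)\<^sup>\<bottom> = range B\<close> (\<open>B\<close> is symmetric), so the equation
  \<open>B z = - P\<^sup>T r(y)\<close> is solvable, and its solutions form a coset of \<open>ker B = ker P\<close>, on which \<open>P\<close>
  is constant. With a linear right inverse \<open>S\<close> of \<open>B\<close> on its range, this constant is
  \<open>L(r(y))\<close> for the linear, hence continuous, map \<open>L v = - P S P\<^sup>T v\<close>; take \<open>g = L \<circ> r\<close>.\<close>

lemma mat_ker_transpose_mult_self: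
  fixes M :: "real^'k^'m"
  shows "mat_ker (transpose M ** M) = mat_ker M"
proof -
  have "(transpose M ** M) *v x = 0 \<longleftrightarrow> M *v x = 0" for x
  proof
    assume "(transpose M ** M) *v x = 0"
    moreover have "(M *v x) \<bullet> (M *v x) = x \<bullet> ((transpose M ** M) *v x)"
      by (simp add: matrix_vector_mul_assoc[symmetric] dot_lmul_matrix[symmetric] inner_commute)
    ultimately have "(M *v x) \<bullet> (M *v x) = 0"
      by simp
    then show "M *v x = 0"
      by simp
  qed (simp add: matrix_vector_mul_assoc[symmetric])
  then show ?thesis
    unfolding mat_ker_def by simp
qed

lemma range_transpose_subset_range_if_mat_ker_subset:
  fixes A :: "real^'n^'m" and C :: "real^'m^'p"
  assumes ker: "mat_ker (transpose A) \<subseteq> mat_ker C"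
  shows "range ((*v) (transpose C)) \<subseteq> range ((*v) A)"
proof clarify
  fix v
  have subspace: "subspace (range ((*v) A))"
    by (metis linear_subspace_image matrix_vector_mul_linear subspace_UNIV)
  obtain a c where a: "a \<in> range ((*v) A)"
    and c: "\<And>u. u \<in> range ((*v) A) \<Longrightarrow> orthogonal c u"
    and decomp: "transpose C *v v = a + c"
    using orthogonal_subspace_decomp_exists[of "range ((*v) A)"] span_eq_iff[of "range ((*v) A)"] subspace
    by metis
  have "(transpose A *v c) \<bullet> (transpose A *v c) = 0"
    using c[of "A *v (transpose A *v c)"] by (simp add: orthogonal_def dot_lmul_matrix)
  then have "C *v c = 0"
    using ker by (auto simp: mat_ker_def)
  then have "(transpose C *v v) \<bullet> c = 0"
    by (simp add: dot_lmul_matrix)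
  moreover have "a \<bullet> c = 0"
    using c[OF a] by (simp add: orthogonal_def inner_commute)
  ultimately have "c = 0"
    using decomp by (simp add: inner_add_left)
  then show "transpose C *v v \<in> range ((*v) A)"
    using a decomp by simp
qed

lemma matrix_vector_mult_eq_iff_if_mat_ker_eq:
  fixes B :: "real^'k^'m" and P :: "real^'k^'j"
  assumes "mat_ker B = mat_ker P"
  shows "B *v z = B *v z' \<longleftrightarrow> P *v z = P *v z'"
proof -
  have "B *v z = B *v z' \<longleftrightarrow> z - z' \<in> mat_ker B"
    by (simp add: mat_ker_def matrix_vector_mult_diff_distrib)
  also have "\<dots> \<longleftrightarrow> P *v z = P *v z'"
    using assms by (simp add: mat_ker_def matrix_vector_mult_diff_distrib)
  finally show ?thesis .
qed

lemma normal_equation_solution_linear: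
  fixes M :: "real^'k^'m" and P :: "real^'k^'j"
  assumes ker_P: "mat_ker P = mat_ker M"
  obtains L :: "real^'j \<Rightarrow> real^'j"
  where "linear L"
    and "\<And>z v. (transpose M ** M) *v z + transpose P *v v = 0 \<longleftrightarrow> P *v z = L v"
proof -
  define B where "B = transpose M ** M"
  have ker_B: "mat_ker B = mat_ker P"
    using ker_P by (simp add: B_def mat_ker_transpose_mult_self)
  have "transpose B = B"
    by (simp add: B_def matrix_transpose_mul)
  then have range_P: "range ((*v) (transpose P)) \<subseteq> range ((*v) B)"
    using range_transpose_subset_range_if_mat_ker_subset[of B P] ker_B by simp
  obtain S where "linear S" and S: "\<And>w. w \<in> range ((*v) B) \<Longrightarrow> B *v S w = w"
    using linear_exists_right_inverse_on[OF matrix_vector_mul_linear subspace_UNIV, of B] by auto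
  define L where "L v = P *v S (- (transpose P *v v))" for v
  have "linear L"
    using linear_compose[OF linear_compose[OF linear_compose_neg[OF matrix_vector_mul_linear]
          \<open>linear S\<close>] matrix_vector_mul_linear]
    unfolding L_def by (simp only: o_def)
  moreover have "B *v z + transpose P *v v = 0 \<longleftrightarrow> P *v z = L v" for z v
  proof -
    define z\<^sub>0 where "z\<^sub>0 = S (- (transpose P *v v))"
    have "- (transpose P *v v) \<in> range ((*v) B)"
      using range_P linear_neg[OF matrix_vector_mul_linear, of "transpose P" v]
      by (metis rangeI subsetD)
    then have "B *v z\<^sub>0 = - (transpose P *v v)"
      unfolding z\<^sub>0_def by (rule S)
    then have "B *v z + transpose P *v v = 0 \<longleftrightarrow> B *v z = B *v z\<^sub>0"
      by (metis eq_neg_iff_add_eq_0)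
    also have "\<dots> \<longleftrightarrow> P *v z = L v"
      unfolding L_def z\<^sub>0_def by (rule matrix_vector_mult_eq_iff_if_mat_ker_eq[OF ker_B])
    finally show ?thesis .
  qed
  ultimately show thesis
    using that unfolding B_def by blast
qed

theorem corollary1:
  fixes M :: "real^'k^'m" and P :: "real^'k^'k" and r :: "real^'n \<Rightarrow> real^'k"
  assumes "projector_along_ker P M"
    and "continuous_on UNIV r"
  shows "\<exists>g :: real^'n \<Rightarrow> real^'k. continuous_on UNIV g \<and>
           (\<forall>z y. (transpose M ** M) *v z + transpose P *v r y = 0 \<longleftrightarrow> P *v z = g y)"
proof -
  obtain L where "linear L"
    and L: "\<And>z v. (transpose M ** M) *v z + transpose P *v v = 0 \<longleftrightarrow> P *v z = L v"
    using normal_equation_solution_linear assms(1) unfolding projector_along_ker_def by metis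
  have "continuous_on UNIV L"
    using \<open>linear L\<close> by (simp add: linear_continuous_on linear_conv_bounded_linear[symmetric])
  then have "continuous_on UNIV (L \<circ> r)"
    using continuous_on_compose[OF assms(2)] continuous_on_subset by blast
  then show ?thesis
    using L by (intro exI[of _ "L \<circ> r"]) simp
qed

end
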